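(* Assume either that $g$ satisfies A1–A4, or that $(g,\mathfrak{D})$ satisfy B1–B4, and that $\mathbb{P}$ satisfies C1. Then: (1) for every $L>0$ and $n$, with probability at least $1-\Lambda_n(L)$ the map $D\mapsto F_X(D)$ is $L$-Lipschitz on $\mathfrak{D}$ with respect to $\|\cdot\|_{1\to2}$; (2) if $L>L_{\mathbb{P}}(\bar g)$ and there is a sequence $(\gamma_n)$ with $\gamma_n\to0$ and $\Gamma_n(\gamma_n)\to0$ as $n\to\infty$, then $D\mapsto\mathbb{E}_{x\sim\mathbb{P}}f_x(D)$ is $L$-Lipschitz on $\mathfrak{D}$ with respect to $\|\cdot\|_{1\to2}$.
   Context: A penalty is $g:\mathbb{R}^d\to\mathbb{R}\cup\{+\infty\}$; $\mathfrak{D}\subset\mathbb{R}^{m\times d}$. $\mathcal{L}_x(D,\alpha)=\tfrac12\|x-D\alpha\|_2^2+g(\alpha)$, $f_x(D)=\inf_\alpha\mathcal{L}_x(D,\alpha)$, $F_X(D)=\frac1n\sum_i f_{x_i}(D)$. $\|\Delta\|_{1\to2}=\max_j\|\delta_j\|_2$. A1: $g\ge0$; A2: $g$ lower semi-continuous; A3: $g(\alpha)\to+\infty$ as $\|\alpha\|\to\infty$; A4: $g(0)=0$. B1: $g=\chi_{\mathcal K}$ (indicator of $\mathcal K$); B2: there is $\kappa>0$ with $\kappa\|\alpha\|_1^2\le\|D\alpha\|_2^2$ for $\alpha\in\mathcal K$, $D\in\mathfrak{D}$; B3: $0\in\mathcal K$; B4: $\mathfrak{D}$ convex. $\bar g(t)=\sup\{\|\alpha\|_1:g(\alpha)\le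 t\}$ under A1–A4, $\bar g(t)=2\sqrt{2t/\kappa}$ under B1–B4. $L_X(\bar g)=\frac1n\sum_i\|x_i\|_2\bar g(\|x_i\|_2^2/2)$. $\mathbb{P}$ is a distribution on $\mathbb{R}^m$, $x_1,\dots,x_n$ i.i.d. $\sim\mathbb{P}$, $X=[x_1,\dots,x_n]$. $L_{\mathbb{P}}(\bar g)=\mathbb{E}\|x\|_2\bar g(\|x\|_2^2/2)$; C1: $L_{\mathbb{P}}(\bar g)<\infty$. $\Lambda_n(L)=\mathbb{P}(L_X(\bar g)>L)$, $\Gamma_n(\gamma)=\sup_{D\in\mathfrak{D}}\mathbb{P}(|F_X(D)-\mathbb{E}f_x(D)|>\gamma)$. *)

theory Defs
  imports "HOL-Analysis.Analysis" "HOL-Probability.Probability"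
begin

text \<open>Signals x live in real^'m, codes alpha in real^'d,
  dictionaries D :: real^'d^'m (m x d matrices, D *v alpha in real^'m).\<close>

definition l1norm :: "real^'d \<Rightarrow> real" where
  "l1norm a = (\<Sum>j\<in>UNIV. \<bar>a $ j\<bar>)"

definition norm12 :: "real^'d^'m \<Rightarrow> real" where
  "norm12 M = Max (range (\<lambda>j. norm (column j M)))"

definition lsc :: "('a::topological_space \<Rightarrow> ereal) \<Rightarrow> bool" where
  "lsc g \<longleftrightarrow> (\<forall>a. g a \<le> Liminf (at a) g)"

definition cost :: "(real^'d \<Rightarrow> ereal) \<Rightarrow> real^'m \<Rightarrow> real^'d^'m \<Rightarrow> real^'d \<Rightarrow> ereal" where
  "cost g x D a = ereal ((1/2) * (norm (x - D *v a))\<^sup>2) + g a"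

text \<open>f_x(D) = inf_alpha L_x(D,alpha); under the standing assumptions (g >= 0, g 0 = 0)
  this infimum lies in [0, ||x||^2/2], so we take its real value.\<close>
definition fx :: "(real^'d \<Rightarrow> ereal) \<Rightarrow> real^'m \<Rightarrow> real^'d^'m \<Rightarrow> real" where
  "fx g x D = real_of_ereal (INF a. cost g x D a)"

definition FX :: "(real^'d \<Rightarrow> ereal) \<Rightarrow> nat \<Rightarrow> (nat \<Rightarrow> real^'m) \<Rightarrow> real^'d^'m \<Rightarrow> real" where
  "FX g n X D = (1 / real n) * (\<Sum>i<n. fx g (X i) D)"

definition assmA :: "(real^'d \<Rightarrow> ereal) \<Rightarrow> bool" where
  "assmA g \<longleftrightarrow> (\<forall>a. g a \<ge> 0) \<and> lsc g \<and> (g \<longlongrightarrow> \<infinity>) at_infinity \<and> g 0 = 0"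

definition indicator_ext :: "'a set \<Rightarrow> 'a \<Rightarrow> ereal" where
  "indicator_ext K a = (if a \<in> K then 0 else \<infinity>)"

definition assmB :: "(real^'d \<Rightarrow> ereal) \<Rightarrow> (real^'d^'m) set \<Rightarrow> real \<Rightarrow> bool" where
  "assmB g DD \<kappa> \<longleftrightarrow> (\<exists>K. g = indicator_ext K
      \<and> \<kappa> > 0 \<and> (\<forall>a\<in>K. \<forall>D\<in>DD. \<kappa> * (l1norm a)\<^sup>2 \<le> (norm (D *v a))\<^sup>2)
      \<and> 0 \<in> K \<and> convex DD)"

definition gbarA :: "(real^'d \<Rightarrow> ereal) \<Rightarrow> real \<Rightarrow> real" where
  "gbarA g t = Sup {l1norm a | a. g a \<le> ereal t}"

definition gbarB :: "real \<Rightarrow> real \<Rightarrow> real" where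
  "gbarB \<kappa> t = 2 * sqrt (2 * t / \<kappa>)"

definition LX :: "(real \<Rightarrow> real) \<Rightarrow> nat \<Rightarrow> (nat \<Rightarrow> real^'m) \<Rightarrow> real" where
  "LX gb n X = (1 / real n) * (\<Sum>i<n. norm (X i) * gb ((norm (X i))\<^sup>2 / 2))"

definition lipschitz_12 :: "(real^'d^'m) set \<Rightarrow> real \<Rightarrow> (real^'d^'m \<Rightarrow> real) \<Rightarrow> bool" where
  "lipschitz_12 DD L F \<longleftrightarrow> (\<forall>D\<in>DD. \<forall>D'\<in>DD. \<bar>F D - F D'\<bar> \<le> L * norm12 (D - D'))"

abbreviation sampleM :: "nat \<Rightarrow> 'a measure \<Rightarrow> (nat \<Rightarrow> 'a) measure" where
  "sampleM n P \<equiv> PiM {..<n} (\<lambda>_. P)"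

definition Lambda_n :: "(real^'m) measure \<Rightarrow> (real \<Rightarrow> real) \<Rightarrow> nat \<Rightarrow> real \<Rightarrow> real" where
  "Lambda_n P gb n L = measure (sampleM n P) {X \<in> space (sampleM n P). LX gb n X > L}"

definition Ef :: "(real^'m) measure \<Rightarrow> (real^'d \<Rightarrow> ereal) \<Rightarrow> real^'d^'m \<Rightarrow> real" where
  "Ef P g D = (\<integral>x. fx g x D \<partial>P)"

definition Gamma_n :: "(real^'m) measure \<Rightarrow> (real^'d \<Rightarrow> ereal) \<Rightarrow> (real^'d^'m) set \<Rightarrow> nat \<Rightarrow> real \<Rightarrow> real" where
  "Gamma_n P g DD n \<gamma> = (SUP D\<in>DD. measure (sampleM n P)
      {X \<in> space (sampleM n P). \<bar>FX g n X D - Ef P g D\<bar> > \<gamma>})"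

definition LPnn :: "(real^'m) measure \<Rightarrow> (real \<Rightarrow> real) \<Rightarrow> ennreal" where
  "LPnn P gb = (\<integral>\<^sup>+x. ennreal (norm x * gb ((norm x)\<^sup>2 / 2)) \<partial>P)"

end

theory Submission
  imports Defs
begin

text \<open>A code \<open>a\<close> that does no worse for \<open>D\<close> than the zero code, whose cost is
  \<open>\<parallel>x\<parallel>\<^sup>2 / 2\<close>, has penalty at most \<open>\<parallel>x\<parallel>\<^sup>2 / 2\<close> and residual at most \<open>\<parallel>x\<parallel>\<close>;
  hence \<open>l1norm a \<le> gb (\<parallel>x\<parallel>\<^sup>2 / 2)\<close>, under B via
  \<open>\<kappa> (l1norm a)\<^sup>2 \<le> \<parallel>D a\<parallel>\<^sup>2 \<le> 4 \<parallel>x\<parallel>\<^sup>2\<close>. Reusing a near-optimal code of \<open>D\<close> for \<open>D + \<Delta>\<close>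
  bounds \<open>f\<^sub>x (D + \<Delta>) - f\<^sub>x D\<close> by \<open>\<parallel>x\<parallel> G \<parallel>\<Delta>\<parallel> + G\<^sup>2 \<parallel>\<Delta>\<parallel>\<^sup>2 / 2\<close> with
  \<open>G = gb (\<parallel>x\<parallel>\<^sup>2 / 2)\<close> and \<open>\<parallel>\<Delta>\<parallel> = norm12 \<Delta>\<close>. The quadratic remainder disappears after
  subdividing the segment from \<open>D\<close> to \<open>D'\<close>, which stays in the dictionary set by convexity
  under B, so \<open>D \<mapsto> f\<^sub>x D\<close> is Lipschitz with constant \<open>\<parallel>x\<parallel> G\<close>. Averaging over the sample gives
  (1) with constant \<open>LX\<close>; integrating against \<open>P\<close> gives (2) with constant \<open>LPnn P gb\<close>. Only near-optimal codes occur.\<close>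

definition penalty_setting ::
    "(real^'d \<Rightarrow> ereal) \<Rightarrow> (real^'d^'m) set \<Rightarrow> real \<Rightarrow> (real \<Rightarrow> real) \<Rightarrow> bool" where
  "penalty_setting g DD \<kappa> gb \<longleftrightarrow> (assmA g \<and> gb = gbarA g) \<or> (assmB g DD \<kappa> \<and> gb = gbarB \<kappa>)"

definition lipschitz_modulus :: "(real \<Rightarrow> real) \<Rightarrow> real^'m \<Rightarrow> real" where
  "lipschitz_modulus gb x = norm x * gb ((norm x)\<^sup>2 / 2)"

definition competitive_codes_bounded ::
    "(real^'d \<Rightarrow> ereal) \<Rightarrow> real^'m \<Rightarrow> real^'d^'m \<Rightarrow> real \<Rightarrow> bool" where
  "competitive_codes_bounded g x D G \<longleftrightarrow>
     (\<forall>a. cost g x D a \<le> ereal ((1/2) * (norm x)\<^sup>2) \<longrightarrow> l1norm a \<le> G)"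

lemma l1norm_nonneg: "0 \<le> l1norm a"
  unfolding l1norm_def by (simp add: sum_nonneg)

lemma l1norm_le_card_norm: "l1norm (a::real^'d) \<le> real CARD('d) * norm a"
proof -
  have "l1norm a \<le> (\<Sum>j\<in>(UNIV::'d set). norm a)"
    unfolding l1norm_def by (rule sum_mono) (rule component_le_norm_cart)
  then show ?thesis by simp
qed

lemma norm_column_le_norm12: "norm (column j M) \<le> norm12 M"
  unfolding norm12_def by (rule Max_ge) auto

lemma norm12_nonneg: "0 \<le> norm12 M"
  using norm_column_le_norm12 norm_ge_zero order_trans by blast

lemma norm_matrix_vector_le_l1norm_norm12: "norm (M *v a) \<le> l1norm a * norm12 M"
proof -
  have "norm (M *v a) = norm (\<Sum>i\<in>UNIV. a $ i *s column i M)"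
    by (simp add: matrix_mult_sum)
  also have "\<dots> \<le> (\<Sum>i\<in>UNIV. norm (a $ i *s column i M))"
    by (rule norm_sum)
  also have "\<dots> \<le> (\<Sum>i\<in>UNIV. \<bar>a $ i\<bar> * norm12 M)"
    by (intro sum_mono) (simp add: scalar_mult_eq_scaleR mult_left_mono norm_column_le_norm12)
  finally show ?thesis by (simp add: l1norm_def sum_distrib_right)
qed

lemma power2_norm_add_le:
  fixes w v :: "'a::real_normed_vector"
  assumes "norm w \<le> X" "norm v \<le> B"
  shows "(norm (w + v))\<^sup>2 \<le> (norm w)\<^sup>2 + 2 * X * B + B\<^sup>2"
proof -
  have "(norm (w + v))\<^sup>2 \<le> (norm w + norm v)\<^sup>2"
    by (simp add: norm_triangle_ineq power_mono)
  also have "\<dots> = (norm w)\<^sup>2 + 2 * (norm w * norm v) + (norm v)\<^sup>2"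
    by (simp add: power2_eq_square algebra_simps)
  also have "\<dots> \<le> (norm w)\<^sup>2 + 2 * X * B + B\<^sup>2"
  proof -
    have "0 \<le> X" by (rule order_trans[OF norm_ge_zero assms(1)])
    then have "norm w * norm v \<le> X * B" by (rule mult_mono[OF assms _ norm_ge_zero])
    moreover have "(norm v)\<^sup>2 \<le> B\<^sup>2" by (rule power_mono[OF assms(2) norm_ge_zero])
    ultimately show ?thesis by linarith
  qed
  finally show ?thesis .
qed

lemma increment_le_of_local_quadratic_bound:
  fixes h :: "real \<Rightarrow> real"
  assumes H: "\<And>s t. s \<in> {0..1} \<Longrightarrow> t \<in> {0..1} \<Longrightarrow> h t - h s \<le> a * \<bar>t - s\<bar> + b * (t - s)\<^sup>2"
  shows "h 1 - h 0 \<le> a"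
proof -
  have step: "h 1 - h 0 \<le> a + b / real N" if N: "N \<ge> 1" for N :: nat
  proof -
    have "h 1 - h 0 = (\<Sum>k<N. h (real (Suc k) / N) - h (real k / N))"
      using N by (subst sum_lessThan_telescope) simp
    also have "\<dots> \<le> (\<Sum>k<N. a * (1 / N) + b * (1 / N)\<^sup>2)"
    proof (rule sum_mono)
      fix k assume "k \<in> {..<N}"
      then have "real (Suc k) / N \<in> {0..1}" "real k / N \<in> {0..1}" by auto
      moreover have "real (Suc k) / N - real k / N = 1 / N"
        by (simp add: diff_divide_distrib[symmetric])
      ultimately show "h (real (Suc k) / N) - h (real k / N) \<le> a * (1 / N) + b * (1 / N)\<^sup>2"
        using H[of "real k / N" "real (Suc k) / N"] by simp
    qed
    also have "\<dots> = a + b / real N"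
      using N by (simp add: power2_eq_square field_simps)
    finally show ?thesis .
  qed
  have "(\<lambda>N. a + b / real N) \<longlonglongrightarrow> a + 0"
    by (intro tendsto_intros)
  then have "h 1 - h 0 \<le> a + 0"
    by (rule LIMSEQ_le_const) (use step in \<open>auto intro!: exI[of _ 1]\<close>)
  then show ?thesis by simp
qed

subsection \<open>The optimal cost \<open>f\<^sub>x\<close>\<close>

lemma ereal_fx:
  assumes g0: "\<forall>a. g a \<ge> 0" "g 0 = 0"
  shows "ereal (fx g x D) = (INF a. cost g x D a)"
proof -
  let ?I = "INF a. cost g x D a"
  have "0 \<le> ?I"
    using g0(1) by (intro INF_greatest) (simp add: cost_def)
  moreover have "?I \<le> cost g x D 0"
    by (rule INF_lower) simp
  moreover have "cost g x D 0 = ereal ((1/2) * (norm x)\<^sup>2)"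
    using g0(2) by (simp add: cost_def)
  ultimately obtain r where "?I = ereal r" by (cases ?I) auto
  then show ?thesis unfolding fx_def by simp
qed

lemma competitive_code_bounds:
  assumes g0: "\<forall>a. g a \<ge> 0" and c: "cost g x D a \<le> ereal ((1/2) * (norm x)\<^sup>2)"
  obtains r where "g a = ereal r" "0 \<le> r" "r \<le> (norm x)\<^sup>2 / 2" "norm (x - D *v a) \<le> norm x"
proof -
  have "g a \<noteq> \<infinity>" using c unfolding cost_def by auto
  then obtain r where r: "g a = ereal r" "0 \<le> r"
    using g0[rule_format, of a] by (cases "g a") auto
  have h: "(1/2) * (norm (x - D *v a))\<^sup>2 + r \<le> (1/2) * (norm x)\<^sup>2"
    using c unfolding cost_def r by simp
  then have "(norm (x - D *v a))\<^sup>2 \<le> (norm x)\<^sup>2" using r(2) by linarith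
  then have "norm (x - D *v a) \<le> norm x" by (simp add: power2_le_iff_abs_le)
  moreover have "r \<le> (norm x)\<^sup>2 / 2" using h zero_le_power2[of "norm (x - D *v a)"] by linarith
  ultimately show ?thesis using r that by blast
qed

lemma competitive_near_optimal_code:
  assumes g0: "\<forall>a. g a \<ge> 0" "g 0 = 0" and e: "0 < e"
  obtains a where "cost g x D a < ereal (fx g x D + e)"
    "cost g x D a \<le> ereal ((1/2) * (norm x)\<^sup>2)"
proof -
  have "(INF a. cost g x D a) < ereal (fx g x D + e)"
    using e by (simp add: ereal_fx[OF g0, symmetric])
  then obtain a0 where a0: "cost g x D a0 < ereal (fx g x D + e)"
    by (auto simp: INF_less_iff)
  have c0: "cost g x D 0 = ereal ((1/2) * (norm x)\<^sup>2)"
    using g0(2) by (simp add: cost_def)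
  show ?thesis
  proof (cases "cost g x D a0 \<le> ereal ((1/2) * (norm x)\<^sup>2)")
    case True
    then show ?thesis using a0 that by blast
  next
    case False
    then have "cost g x D 0 < ereal (fx g x D + e)"
      using a0 c0 by (metis linorder_not_le order.strict_trans)
    then show ?thesis using c0 that[of 0] by simp
  qed
qed

lemma fx_perturb:
  assumes g0: "\<forall>a. g a \<ge> 0" "g 0 = 0"
    and B: "\<And>a. cost g x D a \<le> ereal ((1/2) * (norm x)\<^sup>2) \<Longrightarrow>
              norm ((x' - D' *v a) - (x - D *v a)) \<le> B"
  shows "fx g x' D' \<le> fx g x D + norm x * B + (1/2) * B\<^sup>2"
proof (rule field_le_epsilon)
  fix e :: real assume "0 < e"
  then obtain a where a: "cost g x D a < ereal (fx g x D + e)"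
      and comp: "cost g x D a \<le> ereal ((1/2) * (norm x)\<^sup>2)"
    using competitive_near_optimal_code[OF g0] by blast
  obtain r where r: "g a = ereal r" and res: "norm (x - D *v a) \<le> norm x"
    using competitive_code_bounds[OF g0(1) comp] by blast
  define w where "w = x - D *v a"
  define v where "v = (x' - D' *v a) - w"
  have opt: "(1/2) * (norm w)\<^sup>2 + r < fx g x D + e"
    using a unfolding cost_def w_def r by simp
  have sq: "(norm (w + v))\<^sup>2 \<le> (norm w)\<^sup>2 + 2 * norm x * B + B\<^sup>2"
    using power2_norm_add_le res B[OF comp] unfolding w_def v_def by blast
  have "ereal (fx g x' D') \<le> cost g x' D' a"
    unfolding ereal_fx[OF g0] by (rule INF_lower) simp
  also have "\<dots> = ereal ((1/2) * (norm (w + v))\<^sup>2 + r)"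
    unfolding cost_def v_def r by simp
  finally show "fx g x' D' \<le> fx g x D + norm x * B + (1/2) * B\<^sup>2 + e"
    using sq opt by simp
qed

lemma fx_segment_step:
  assumes g0: "\<forall>a. g a \<ge> 0" "g 0 = 0"
    and comp: "competitive_codes_bounded g x (D + s *\<^sub>R \<Delta>) G"
  shows "fx g x (D + t *\<^sub>R \<Delta>) - fx g x (D + s *\<^sub>R \<Delta>)
     \<le> (norm x * G * norm12 \<Delta>) * \<bar>t - s\<bar> + ((1/2) * G\<^sup>2 * (norm12 \<Delta>)\<^sup>2) * (t - s)\<^sup>2"
proof -
  have "fx g x (D + t *\<^sub>R \<Delta>) \<le> fx g x (D + s *\<^sub>R \<Delta>) + norm x * (\<bar>t - s\<bar> * G * norm12 \<Delta>)
       + (1/2) * (\<bar>t - s\<bar> * G * norm12 \<Delta>)\<^sup>2"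
  proof (rule fx_perturb[OF g0])
    fix a assume "cost g x (D + s *\<^sub>R \<Delta>) a \<le> ereal ((1/2) * (norm x)\<^sup>2)"
    then have "l1norm a \<le> G" using comp unfolding competitive_codes_bounded_def by blast
    have "(x - (D + t *\<^sub>R \<Delta>) *v a) - (x - (D + s *\<^sub>R \<Delta>) *v a) = (s - t) *\<^sub>R (\<Delta> *v a)"
      by (simp add: matrix_vector_mult_add_rdistrib scaleR_matrix_vector_assoc[symmetric] algebra_simps)
    then have "norm ((x - (D + t *\<^sub>R \<Delta>) *v a) - (x - (D + s *\<^sub>R \<Delta>) *v a))
        = \<bar>t - s\<bar> * norm (\<Delta> *v a)"
      by (simp add: abs_minus_commute)
    also have "\<dots> \<le> \<bar>t - s\<bar> * (G * norm12 \<Delta>)"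
    proof -
      have "norm (\<Delta> *v a) \<le> G * norm12 \<Delta>"
        using norm_matrix_vector_le_l1norm_norm12[of \<Delta> a] \<open>l1norm a \<le> G\<close> norm12_nonneg[of \<Delta>]
        by (meson mult_right_mono order_trans)
      then show ?thesis by (simp add: mult_left_mono)
    qed
    finally show "norm ((x - (D + t *\<^sub>R \<Delta>) *v a) - (x - (D + s *\<^sub>R \<Delta>) *v a))
        \<le> \<bar>t - s\<bar> * G * norm12 \<Delta>"
      by (simp add: mult.assoc)
  qed
  then show ?thesis by (simp add: power_mult_distrib power2_abs algebra_simps)
qed

lemma fx_segment_lipschitz:
  assumes g0: "\<forall>a. g a \<ge> 0" "g 0 = 0"
    and comp: "\<And>t. t \<in> {0..1} \<Longrightarrow> competitive_codes_bounded g x (D + t *\<^sub>R \<Delta>) G"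
  shows "\<bar>fx g x (D + \<Delta>) - fx g x D\<bar> \<le> norm x * G * norm12 \<Delta>"
proof -
  define h where "h t = fx g x (D + t *\<^sub>R \<Delta>)" for t
  define a where "a = norm x * G * norm12 \<Delta>"
  define b where "b = (1/2) * G\<^sup>2 * (norm12 \<Delta>)\<^sup>2"
  have H: "h t - h s \<le> a * \<bar>t - s\<bar> + b * (t - s)\<^sup>2" if "s \<in> {0..1}" for s t
    unfolding h_def a_def b_def by (rule fx_segment_step[OF g0 comp[OF that]])
  have "h 1 - h 0 \<le> a"
    using H by (rule increment_le_of_local_quadratic_bound)
  moreover have "(\<lambda>t. h (1 - t)) 1 - (\<lambda>t. h (1 - t)) 0 \<le> a"
  proof (rule increment_le_of_local_quadratic_bound)
    fix s t :: real assume "s \<in> {0..1}" "t \<in> {0..1}"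
    then show "h (1 - t) - h (1 - s) \<le> a * \<bar>t - s\<bar> + b * (t - s)\<^sup>2"
      using H[of "1 - s" "1 - t"] by (simp add: abs_minus_commute power2_commute)
  qed
  ultimately show ?thesis unfolding h_def a_def by simp
qed

lemma fx_signal_perturb:
  assumes g0: "\<forall>a. g a \<ge> 0" "g 0 = 0"
  shows "\<bar>fx g y D - fx g x D\<bar> \<le> (norm x + norm (y - x)) * norm (y - x) + (1/2) * (norm (y - x))\<^sup>2"
proof -
  have up: "fx g y D \<le> fx g x D + norm x * norm (y - x) + (1/2) * (norm (y - x))\<^sup>2" for x y
    by (rule fx_perturb[OF g0]) simp
  have "norm y \<le> norm x + norm (y - x)"
    using norm_triangle_ineq[of x "y - x"] by simp
  then have "norm y * norm (y - x) \<le> (norm x + norm (y - x)) * norm (y - x)"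
    by (simp add: mult_right_mono)
  moreover have "norm x * norm (y - x) \<le> (norm x + norm (y - x)) * norm (y - x)"
    by (simp add: distrib_right)
  ultimately show ?thesis
    using up[of x y] up[of y x] unfolding norm_minus_commute[of x y] by linarith
qed

lemma continuous_fx:
  assumes g0: "\<forall>a. g a \<ge> 0" "g 0 = 0"
  shows "continuous_on UNIV (\<lambda>x. fx g x D)"
proof -
  have "((\<lambda>y. fx g y D) \<longlongrightarrow> fx g x D) (at x)" for x
  proof -
    define k where "k y = (norm x + norm (y - x)) * norm (y - x) + (1/2) * (norm (y - x))\<^sup>2" for y
    have "(k \<longlongrightarrow> k x) (at x)"
      unfolding k_def by (intro tendsto_intros)
    then have "(k \<longlongrightarrow> 0) (at x)" unfolding k_def by simp
    moreover have "\<forall>\<^sub>F y in at x. norm (fx g y D - fx g x D) \<le> k y"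
      unfolding k_def using fx_signal_perturb[OF g0] by (intro always_eventually allI) simp
    ultimately have "((\<lambda>y. fx g y D - fx g x D) \<longlongrightarrow> 0) (at x)"
      by (rule Lim_null_comparison[rotated])
    then show ?thesis by (simp add: LIM_zero_iff)
  qed
  then show ?thesis by (simp add: continuous_at_imp_continuous_on isCont_def)
qed

subsection \<open>The Lipschitz modulus of \<open>f\<^sub>x\<close>\<close>

lemma penalty_setting_g:
  assumes "penalty_setting g DD \<kappa> gb"
  shows "\<forall>a. g a \<ge> 0" "g 0 = 0"
  using assms unfolding penalty_setting_def assmA_def assmB_def indicator_ext_def by auto

lemma bdd_above_l1norm_sublevel:
  fixes g :: "real^'d \<Rightarrow> ereal"
  assumes A: "assmA g"
  shows "bdd_above {l1norm a | a. g a \<le> ereal t}"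
proof -
  have "eventually (\<lambda>a. g a > ereal t) at_infinity"
    using A unfolding assmA_def by (simp add: tendsto_PInfty)
  then obtain r where r: "\<And>a. norm a \<ge> r \<Longrightarrow> g a > ereal t"
    by (auto simp: eventually_at_infinity)
  show ?thesis
  proof (rule bdd_aboveI)
    fix y assume "y \<in> {l1norm a | a. g a \<le> ereal t}"
    then obtain a where y: "y = l1norm a" and "g a \<le> ereal t" by auto
    then have "norm a \<le> r" using r by (meson linorder_not_le less_imp_le)
    then show "y \<le> real CARD('d) * r"
      using order_trans[OF l1norm_le_card_norm mult_left_mono[OF \<open>norm a \<le> r\<close>]] y by simp
  qed
qed

lemma l1norm_le_gbarA:
  assumes "assmA g" "g a \<le> ereal t"
  shows "l1norm a \<le> gbarA g t"
  unfolding gbarA_def using assms by (auto intro!: cSup_upper bdd_above_l1norm_sublevel)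

lemma gbarA_nonneg:
  fixes g :: "real^'d \<Rightarrow> ereal"
  assumes A: "assmA g" and "t \<ge> 0"
  shows "0 \<le> gbarA g t"
proof -
  have "g 0 \<le> ereal t" using A assms(2) unfolding assmA_def by simp
  then have "l1norm (0::real^'d) \<le> gbarA g t" by (rule l1norm_le_gbarA[OF A])
  then show ?thesis by (simp add: l1norm_def)
qed

lemma gbarA_mono:
  assumes A: "assmA g" and "0 \<le> s" "s \<le> t"
  shows "gbarA g s \<le> gbarA g t"
  unfolding gbarA_def
proof (rule cSup_subset_mono)
  have "g 0 \<le> ereal s" using A assms(2) unfolding assmA_def by simp
  then show "{l1norm a | a. g a \<le> ereal s} \<noteq> {}" by blast
  show "bdd_above {l1norm a | a. g a \<le> ereal t}" using A by (rule bdd_above_l1norm_sublevel)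
  have "g a \<le> ereal t" if "g a \<le> ereal s" for a
    using that assms(3) by (metis ereal_less_eq(3) order_trans)
  then show "{l1norm a | a. g a \<le> ereal s} \<subseteq> {l1norm a | a. g a \<le> ereal t}"
    by blast
qed

lemma competitive_codes_bounded_gbarA:
  assumes A: "assmA g"
  shows "competitive_codes_bounded g x D (gbarA g ((norm x)\<^sup>2 / 2))"
  unfolding competitive_codes_bounded_def
proof (intro allI impI)
  fix a assume "cost g x D a \<le> ereal ((1/2) * (norm x)\<^sup>2)"
  then obtain r where "g a = ereal r" "r \<le> (norm x)\<^sup>2 / 2"
    using competitive_code_bounds A unfolding assmA_def by metis
  then show "l1norm a \<le> gbarA g ((norm x)\<^sup>2 / 2)" using l1norm_le_gbarA[OF A] by simp
qed

lemma gbarB_half_square: "gbarB \<kappa> (n\<^sup>2 / 2) = sqrt ((2 * n)\<^sup>2 / \<kappa>)"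
proof -
  have "(2 * n)\<^sup>2 / \<kappa> = 2\<^sup>2 * (2 * (n\<^sup>2 / 2) / \<kappa>)" by (simp add: power_mult_distrib)
  then show ?thesis unfolding gbarB_def by (simp only: real_sqrt_mult real_sqrt_abs)
qed

lemma competitive_codes_bounded_gbarB:
  assumes B: "assmB g DD \<kappa>" and D: "D \<in> DD"
  shows "competitive_codes_bounded g x D (gbarB \<kappa> ((norm x)\<^sup>2 / 2))"
  unfolding competitive_codes_bounded_def
proof (intro allI impI)
  fix a assume c: "cost g x D a \<le> ereal ((1/2) * (norm x)\<^sup>2)"
  obtain K where K: "g = indicator_ext K" "\<kappa> > 0"
      "\<forall>a\<in>K. \<forall>D\<in>DD. \<kappa> * (l1norm a)\<^sup>2 \<le> (norm (D *v a))\<^sup>2"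
    using B unfolding assmB_def by blast
  have g0: "\<forall>a. g a \<ge> 0" using K(1) unfolding indicator_ext_def by auto
  obtain r where "g a = ereal r" and res: "norm (x - D *v a) \<le> norm x"
    using competitive_code_bounds[OF g0 c] by blast
  then have "a \<in> K" using K(1) unfolding indicator_ext_def by (auto split: if_splits)
  have "norm (D *v a) \<le> 2 * norm x"
    using norm_triangle_ineq4[of x "x - D *v a"] res by simp
  then have "(norm (D *v a))\<^sup>2 \<le> (2 * norm x)\<^sup>2"
    by (rule power_mono) simp
  moreover have "\<kappa> * (l1norm a)\<^sup>2 \<le> (norm (D *v a))\<^sup>2"
    using K(3) \<open>a \<in> K\<close> D by blast
  ultimately have "\<kappa> * (l1norm a)\<^sup>2 \<le> (2 * norm x)\<^sup>2" by linarith
  then have "(l1norm a)\<^sup>2 \<le> (2 * norm x)\<^sup>2 / \<kappa>" using K(2) by (simp add: field_simps)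
  then have "l1norm a \<le> sqrt ((2 * norm x)\<^sup>2 / \<kappa>)" by (metis l1norm_nonneg real_le_rsqrt)
  also have "\<dots> = gbarB \<kappa> ((norm x)\<^sup>2 / 2)"
    by (rule gbarB_half_square[symmetric])
  finally show "l1norm a \<le> gbarB \<kappa> ((norm x)\<^sup>2 / 2)" .
qed

lemma fx_lipschitz:
  assumes S: "penalty_setting g DD \<kappa> gb" and D: "D \<in> DD" "D' \<in> DD"
  shows "\<bar>fx g x D - fx g x D'\<bar> \<le> lipschitz_modulus gb x * norm12 (D - D')"
proof -
  have "competitive_codes_bounded g x (D' + t *\<^sub>R (D - D')) (gb ((norm x)\<^sup>2 / 2))"
    if t: "t \<in> {0..1}" for t
    using S unfolding penalty_setting_def
  proof
    assume "assmA g \<and> gb = gbarA g"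
    then show ?thesis using competitive_codes_bounded_gbarA by blast
  next
    assume B: "assmB g DD \<kappa> \<and> gb = gbarB \<kappa>"
    then have "convex DD" unfolding assmB_def by (elim conjE exE)
    then have "(1 - t) *\<^sub>R D' + t *\<^sub>R D \<in> DD"
      using D t by (intro convexD) auto
    moreover have "(1 - t) *\<^sub>R D' + t *\<^sub>R D = D' + t *\<^sub>R (D - D')"
      by (simp add: algebra_simps)
    ultimately show ?thesis using competitive_codes_bounded_gbarB B by metis
  qed
  from fx_segment_lipschitz[OF penalty_setting_g[OF S] this]
  show ?thesis by (simp add: lipschitz_modulus_def)
qed

lemma lipschitz_modulus_nonneg:
  assumes S: "penalty_setting g DD \<kappa> gb"
  shows "0 \<le> lipschitz_modulus gb x"
proof -
  have "0 \<le> gb ((norm x)\<^sup>2 / 2)"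
    using S unfolding penalty_setting_def
  proof
    assume "assmA g \<and> gb = gbarA g"
    then show ?thesis by (auto intro: gbarA_nonneg)
  next
    assume "assmB g DD \<kappa> \<and> gb = gbarB \<kappa>"
    then show ?thesis unfolding assmB_def gbarB_def by auto
  qed
  then show ?thesis unfolding lipschitz_modulus_def by simp
qed

lemma borel_measurable_lipschitz_modulus:
  assumes S: "penalty_setting g DD \<kappa> gb"
  shows "lipschitz_modulus gb \<in> borel_measurable (borel :: (real^'m) measure)"
  using S unfolding penalty_setting_def
proof
  assume A: "assmA g \<and> gb = gbarA g"
  \<comment> \<open>\<open>gbarA g\<close> is monotone only on nonnegative levels: a negative sublevel set may be empty,
    and \<open>Sup {}\<close> is an unspecified value.\<close>
  define gb' where "gb' t = gb (max t 0)" for t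
  have "mono gb'"
  proof (rule monoI)
    fix s t :: real assume "s \<le> t"
    then show "gb' s \<le> gb' t"
      using A gbarA_mono[of g "max s 0" "max t 0"] unfolding gb'_def by simp
  qed
  then have "gb' \<in> borel_measurable borel" by (rule borel_measurable_mono)
  then have "(\<lambda>x::real^'m. norm x * gb' ((norm x)\<^sup>2 / 2)) \<in> borel_measurable borel"
    by (intro borel_measurable_times borel_measurable_norm measurable_compose[OF _ \<open>gb' \<in> _\<close>])
      measurable
  moreover have "lipschitz_modulus gb = (\<lambda>x::real^'m. norm x * gb' ((norm x)\<^sup>2 / 2))"
    unfolding gb'_def lipschitz_modulus_def by simp
  ultimately show ?thesis by simp
next
  assume "assmB g DD \<kappa> \<and> gb = gbarB \<kappa>"
  then have "gb = gbarB \<kappa>" by blast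
  show ?thesis unfolding \<open>gb = gbarB \<kappa>\<close> gbarB_def lipschitz_modulus_def by measurable
qed

subsection \<open>Empirical and expected costs\<close>

lemma lipschitz_12_mono:
  assumes "lipschitz_12 DD L F" "L \<le> L'"
  shows "lipschitz_12 DD L' F"
  using assms norm12_nonneg unfolding lipschitz_12_def by (meson mult_right_mono order_trans)

lemma lipschitz_12_FX:
  assumes lip: "\<And>x D D'. D \<in> DD \<Longrightarrow> D' \<in> DD \<Longrightarrow> \<bar>fx g x D - fx g x D'\<bar> \<le> c x * norm12 (D - D')"
  shows "lipschitz_12 DD ((1 / real n) * (\<Sum>i<n. c (X i))) (FX g n X)"
  unfolding lipschitz_12_def
proof (intro ballI)
  fix D D' assume D: "D \<in> DD" "D' \<in> DD"
  have "\<bar>FX g n X D - FX g n X D'\<bar> = (1 / real n) * \<bar>\<Sum>i<n. fx g (X i) D - fx g (X i) D'\<bar>"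
    unfolding FX_def by (simp add: sum_subtractf diff_divide_distrib[symmetric] abs_divide)
  also have "\<dots> \<le> (1 / real n) * (\<Sum>i<n. c (X i) * norm12 (D - D'))"
    using lip[OF D] by (intro mult_left_mono order_trans[OF sum_abs] sum_mono) auto
  finally show "\<bar>FX g n X D - FX g n X D'\<bar> \<le> (1 / real n) * (\<Sum>i<n. c (X i)) * norm12 (D - D')"
    by (simp add: sum_distrib_right)
qed

lemma integrable_of_dominated_difference:
  fixes u w c :: "'a \<Rightarrow> real"
  assumes u: "integrable M u" and w: "w \<in> borel_measurable M" and c: "integrable M c"
    and bound: "\<And>x. \<bar>u x - w x\<bar> \<le> c x * k"
  shows "integrable M w"
proof -
  have "integrable M (\<lambda>x. u x - w x)"
  proof (rule Bochner_Integration.integrable_bound)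
    show "integrable M (\<lambda>x. c x * k)" using c by simp
    show "(\<lambda>x. u x - w x) \<in> borel_measurable M"
      using borel_measurable_integrable[OF u] w by (rule borel_measurable_diff)
    have "norm (u x - w x) \<le> norm (c x * k)" for x
      using bound[of x] by (metis abs_ge_self order_trans real_norm_def)
    then show "AE x in M. norm (u x - w x) \<le> norm (c x * k)"
      by (intro always_eventually allI)
  qed
  from Bochner_Integration.integrable_diff[OF u this] show ?thesis by simp
qed

lemma lipschitz_12_integral:
  fixes f :: "'a \<Rightarrow> real^'d^'m \<Rightarrow> real"
  assumes c: "integrable M c" "\<And>x. 0 \<le> c x" and L: "integral\<^sup>L M c \<le> L"
    and f: "\<And>D. (\<lambda>x. f x D) \<in> borel_measurable M"
    and lip: "\<And>x D D'. D \<in> DD \<Longrightarrow> D' \<in> DD \<Longrightarrow> \<bar>f x D - f x D'\<bar> \<le> c x * norm12 (D - D')"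
  shows "lipschitz_12 DD L (\<lambda>D. \<integral>x. f x D \<partial>M)"
  unfolding lipschitz_12_def
proof (intro ballI)
  fix D D' assume D: "D \<in> DD" "D' \<in> DD"
  let ?k = "norm12 (D - D')"
  have "0 \<le> integral\<^sup>L M c" using c(2) by (simp add: integral_nonneg)
  with L have "0 \<le> L" by linarith
  show "\<bar>(\<integral>x. f x D \<partial>M) - (\<integral>x. f x D' \<partial>M)\<bar> \<le> L * ?k"
  proof (cases "integrable M (\<lambda>x. f x D)")
    case True
    moreover have "integrable M (\<lambda>x. f x D')"
      by (rule integrable_of_dominated_difference[OF True f c(1) lip[OF D]])
    ultimately have "\<bar>(\<integral>x. f x D \<partial>M) - (\<integral>x. f x D' \<partial>M)\<bar> = \<bar>\<integral>x. f x D - f x D' \<partial>M\<bar>"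
      by simp
    also have "\<dots> \<le> (\<integral>x. \<bar>f x D - f x D'\<bar> \<partial>M)"
      by (rule integral_abs_bound)
    also have "\<dots> \<le> (\<integral>x. c x * ?k \<partial>M)"
      using True \<open>integrable M (\<lambda>x. f x D')\<close> c(1) lip[OF D] by (intro integral_mono) auto
    also have "\<dots> = integral\<^sup>L M c * ?k" by simp
    also have "\<dots> \<le> L * ?k" by (rule mult_right_mono[OF L norm12_nonneg])
    finally show ?thesis .
  next
    case False
    have "\<bar>f x D' - f x D\<bar> \<le> c x * ?k" for x using lip[OF D, of x] by simp
    from integrable_of_dominated_difference[OF _ f c(1) this] False
    have "\<not> integrable M (\<lambda>x. f x D')" by blast
    then show ?thesis
      using False \<open>0 \<le> L\<close> norm12_nonneg[of "D - D'"] by (simp add: not_integrable_integral_eq)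
  qed
qed

lemma lipschitz_FX_with_high_probability:
  fixes P :: "(real^'m) measure"
  assumes S: "penalty_setting g DD \<kappa> gb" and P: "prob_space P" "sets P = sets borel"
  shows "\<exists>E\<in>sets (sampleM n P).
           E \<subseteq> {X \<in> space (sampleM n P). lipschitz_12 DD L (FX g n X)}
           \<and> measure (sampleM n P) E \<ge> 1 - Lambda_n P gb n L"
proof -
  let ?M = "sampleM n P"
  interpret M: prob_space ?M using P(1) by (rule prob_space_PiM)
  have LX_eq: "LX gb n X = (1 / real n) * (\<Sum>i<n. lipschitz_modulus gb (X i))" for X
    by (simp add: LX_def lipschitz_modulus_def)
  have cP: "lipschitz_modulus gb \<in> borel_measurable P"
    unfolding measurable_cong_sets[OF P(2) refl] by (rule borel_measurable_lipschitz_modulus[OF S])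
  have "(\<lambda>X. lipschitz_modulus gb (X i)) \<in> borel_measurable ?M" if "i \<in> {..<n}" for i
    by (rule measurable_compose[OF measurable_component_singleton[OF that] cP])
  then have "(\<lambda>X. LX gb n X) \<in> borel_measurable ?M"
    unfolding LX_eq by (intro borel_measurable_times borel_measurable_const borel_measurable_sum)
  then have S_sets: "{X \<in> space ?M. LX gb n X > L} \<in> sets ?M" by measurable
  define E where "E = space ?M - {X \<in> space ?M. LX gb n X > L}"
  have E_sets: "E \<in> sets ?M" unfolding E_def using S_sets by blast
  have "measure ?M E = 1 - Lambda_n P gb n L"
    unfolding E_def Lambda_n_def by (rule M.prob_compl[OF S_sets])
  moreover have "E \<subseteq> {X \<in> space ?M. lipschitz_12 DD L (FX g n X)}"
  proof safe
    fix X assume "X \<in> E"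
    then show "X \<in> space ?M" unfolding E_def by blast
    show "lipschitz_12 DD L (FX g n X)"
    proof (rule lipschitz_12_mono)
      show "lipschitz_12 DD (LX gb n X) (FX g n X)"
        unfolding LX_eq using fx_lipschitz[OF S] by (rule lipschitz_12_FX)
      show "LX gb n X \<le> L" using \<open>X \<in> E\<close> unfolding E_def by (simp add: not_less)
    qed
  qed
  ultimately show ?thesis using E_sets by (intro bexI[of _ E]) simp_all
qed

lemma lipschitz_Ef:
  fixes P :: "(real^'m) measure"
  assumes S: "penalty_setting g DD \<kappa> gb" and P: "prob_space P" "sets P = sets borel"
    and C1: "LPnn P gb < \<infinity>" and L: "L > enn2real (LPnn P gb)"
  shows "lipschitz_12 DD L (Ef P g)"
proof -
  let ?c = "lipschitz_modulus gb"
  have c0: "0 \<le> ?c x" for x by (rule lipschitz_modulus_nonneg[OF S])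
  have LPnn_eq: "LPnn P gb = (\<integral>\<^sup>+x. ennreal (?c x) \<partial>P)"
    unfolding LPnn_def lipschitz_modulus_def ..
  have cP: "?c \<in> borel_measurable P"
    unfolding measurable_cong_sets[OF P(2) refl] by (rule borel_measurable_lipschitz_modulus[OF S])
  have c_int: "integrable P ?c"
  proof (rule integrableI_nonneg[OF cP])
    show "AE x in P. 0 \<le> ?c x" by (rule AE_I2) (rule c0)
    show "(\<integral>\<^sup>+x. ?c x \<partial>P) < \<infinity>" using C1 unfolding LPnn_eq .
  qed
  have "LPnn P gb = ennreal (integral\<^sup>L P ?c)"
    unfolding LPnn_eq by (rule nn_integral_eq_integral[OF c_int AE_I2[OF c0]])
  moreover have "0 \<le> integral\<^sup>L P ?c" by (rule integral_nonneg_AE[OF AE_I2[OF c0]])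
  ultimately have "integral\<^sup>L P ?c \<le> L" using L by simp
  moreover have "(\<lambda>x. fx g x D) \<in> borel_measurable P" for D
    unfolding measurable_cong_sets[OF P(2) refl]
    by (rule borel_measurable_continuous_onI[OF continuous_fx[OF penalty_setting_g[OF S]]])
  ultimately show ?thesis
    unfolding Ef_def by (rule lipschitz_12_integral[OF c_int c0 _ _ fx_lipschitz[OF S]])
qed

theorem mainTheorem11:
  fixes g :: "real^'d \<Rightarrow> ereal" and DD :: "(real^'d^'m) set" and \<kappa> :: real
    and gb :: "real \<Rightarrow> real" and P :: "(real^'m) measure"
  assumes hyp: "(assmA g \<and> gb = gbarA g) \<or> (assmB g DD \<kappa> \<and> gb = gbarB \<kappa>)"
    and P: "prob_space P" "sets P = sets borel"
    and C1: "LPnn P gb < \<infinity>"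
  shows "(\<forall>L>0. \<forall>n. \<exists>E\<in>sets (sampleM n P).
            E \<subseteq> {X \<in> space (sampleM n P). lipschitz_12 DD L (FX g n X)}
            \<and> measure (sampleM n P) E \<ge> 1 - Lambda_n P gb n L)
       \<and> (\<forall>L. L > enn2real (LPnn P gb) \<longrightarrow>
            (\<exists>\<gamma>::nat \<Rightarrow> real. \<gamma> \<longlonglongrightarrow> 0 \<and> (\<lambda>n. Gamma_n P g DD n (\<gamma> n)) \<longlonglongrightarrow> 0) \<longrightarrow>
            lipschitz_12 DD L (Ef P g))"
proof -
  have S: "penalty_setting g DD \<kappa> gb"
    using hyp unfolding penalty_setting_def .
  show ?thesis
    using lipschitz_FX_with_high_probability[OF S P] lipschitz_Ef[OF S P C1] by blast
qed

end
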